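(* Let $q\ge 2$ and $k\ge 1$ be fixed integers and let $\Gamma$ be a finite, non-trivial constraint language consisting of $k$-ary relations over $[q]=\{0,1,\dots,q-1\}$. Then, for deciding satisfiability of instances of $\mathsf{CSP}(\Gamma)$ on $n$ variables presented as a single-pass stream of constraints: (a) there exists a deterministic single-pass streaming algorithm using $O_{q,k}(\mathsf{NRD}_n(\Gamma)\log n)$ bits of space; and (b) no randomized single-pass streaming algorithm (succeeding with probability at least $2/3$ on every input) uses $o(\mathsf{NRD}_n(\Gamma))$ bits of space.
   Context: An instance of $\mathsf{CSP}(\Gamma)$ on variables $x_1,\dots,x_n$ taking values in $[q]$ is a finite set of constraints, each of the form $\{R,(x_{i_1}+\lambda_{i_1},\dots,x_{i_k}+\lambda_{i_k})\}$ with $R\in\Gamma$, $(i_1,\dots,i_k)\in[n]^k$ and shifts $\lambda_{i_j}\in[q]$; an assignment $a\in[q]^n$ satisfies it if $(a_{i_1}+\lambda_{i_1},\dots,a_{i_k}+\lambda_{i_k})\in R$, with arithmetic modulo $q$. $\mathrm{Sat}(I)$ is the set of assignments satisfying every constraint of $I$; $I$ is satisfiable if $\mathrm{Sat}(I)\neq\emptyset$. A constraint $C\in I$ is redundant if $\mathrm{Sat}(I\setminus\{C\})=\mathrm{Sat}(I)$; $I$ is non-redundant if none of its constraints is redundant. $\mathsf{NRD}_n(\Gamma)$ is the maximum number of constraints in a non-redundant instance of $\mathsf{CSP}(\Gamma)$ on $n$ variables. $\Gamma$ is non-trivial if every relation in $\Gamma$ is non-empty and at least one relation in $\Gamma$ is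 a proper subset of $[q]^k$. In the streaming model the constraints arrive one at a time and at the end the algorithm must output whether the instance is satisfiable; a deterministic algorithm must always be correct, a randomized one correct with probability at least $2/3$ on every input. Hidden constants may depend on $q$, $k$ and $\Gamma$. *)

theory Defs
  imports "HOL-Probability.Probability_Mass_Function" "HOL-Library.Landau_Symbols"
begin

text \<open>A constraint is a triple (R, idx, sh): relation R, variable indices idx
  (length k) and shifts sh (length k), where the shift attached to a position
  is the shift of the variable at that position (so equal variables get equal
  shifts).\<close>

type_synonym constr = "nat list set \<times> nat list \<times> nat list"

definition is_relation :: "nat \<Rightarrow> nat \<Rightarrow> nat list set \<Rightarrow> bool" where
  "is_relation q k R \<longleftrightarrow> (\<forall>t\<in>R. length t = k \<and> (\<forall>x\<in>set t. x < q))"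

definition full_tuples :: "nat \<Rightarrow> nat \<Rightarrow> nat list set" where
  "full_tuples q k = {t. length t = k \<and> (\<forall>x\<in>set t. x < q)}"

definition nontrivial_lang :: "nat \<Rightarrow> nat \<Rightarrow> nat list set set \<Rightarrow> bool" where
  "nontrivial_lang q k \<Gamma> \<longleftrightarrow> (\<forall>R\<in>\<Gamma>. R \<noteq> {}) \<and> (\<exists>R\<in>\<Gamma>. R \<subset> full_tuples q k)"

definition valid_constr :: "nat \<Rightarrow> nat \<Rightarrow> nat list set set \<Rightarrow> nat \<Rightarrow> constr \<Rightarrow> bool" where
  "valid_constr q k \<Gamma> n C \<longleftrightarrow> (case C of (R, idx, sh) \<Rightarrow>
     R \<in> \<Gamma> \<and> length idx = k \<and> length sh = k \<and>
     (\<forall>i\<in>set idx. i < n) \<and> (\<forall>l\<in>set sh. l < q) \<and>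
     (\<forall>j<k. \<forall>j'<k. idx ! j = idx ! j' \<longrightarrow> sh ! j = sh ! j'))"

definition is_instance :: "nat \<Rightarrow> nat \<Rightarrow> nat list set set \<Rightarrow> nat \<Rightarrow> constr set \<Rightarrow> bool" where
  "is_instance q k \<Gamma> n I \<longleftrightarrow> finite I \<and> (\<forall>C\<in>I. valid_constr q k \<Gamma> n C)"

definition assignments :: "nat \<Rightarrow> nat \<Rightarrow> nat list set" where
  "assignments q n = {a. length a = n \<and> (\<forall>x\<in>set a. x < q)}"

definition sat_constr :: "nat \<Rightarrow> constr \<Rightarrow> nat list \<Rightarrow> bool" where
  "sat_constr q C a \<longleftrightarrow> (case C of (R, idx, sh) \<Rightarrow>
     map (\<lambda>(i, l). (a ! i + l) mod q) (zip idx sh) \<in> R)"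

definition Sat :: "nat \<Rightarrow> nat \<Rightarrow> constr set \<Rightarrow> nat list set" where
  "Sat q n I = {a \<in> assignments q n. \<forall>C\<in>I. sat_constr q C a}"

definition non_redundant :: "nat \<Rightarrow> nat \<Rightarrow> constr set \<Rightarrow> bool" where
  "non_redundant q n I \<longleftrightarrow> (\<forall>C\<in>I. Sat q n (I - {C}) \<noteq> Sat q n I)"

definition NRD :: "nat \<Rightarrow> nat \<Rightarrow> nat list set set \<Rightarrow> nat \<Rightarrow> nat" where
  "NRD q k \<Gamma> n = Max {card I | I. is_instance q k \<Gamma> n I \<and> non_redundant q n I}"

definition valid_stream :: "nat \<Rightarrow> nat \<Rightarrow> nat list set set \<Rightarrow> nat \<Rightarrow> constr list \<Rightarrow> bool" where
  "valid_stream q k \<Gamma> n xs \<longleftrightarrow> distinct xs \<and> (\<forall>C\<in>set xs. valid_constr q k \<Gamma> n C)"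

text \<open>Deterministic single-pass streaming algorithm with memory states S
  (space = log2 |S| bits), initial state, transition and output function.\<close>
definition det_run :: "nat \<Rightarrow> (nat \<Rightarrow> constr \<Rightarrow> nat) \<Rightarrow> constr list \<Rightarrow> nat" where
  "det_run s0 \<delta> xs = fold (\<lambda>c s. \<delta> s c) xs s0"

definition det_stream_alg ::
  "nat \<Rightarrow> nat \<Rightarrow> nat list set set \<Rightarrow> nat \<Rightarrow> real \<Rightarrow>
   nat set \<Rightarrow> nat \<Rightarrow> (nat \<Rightarrow> constr \<Rightarrow> nat) \<Rightarrow> (nat \<Rightarrow> bool) \<Rightarrow> bool" where
  "det_stream_alg q k \<Gamma> n b S s0 \<delta> out \<longleftrightarrow>
     finite S \<and> real (card S) \<le> 2 powr b \<and> s0 \<in> S \<and>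
     (\<forall>s\<in>S. \<forall>C. valid_constr q k \<Gamma> n C \<longrightarrow> \<delta> s C \<in> S) \<and>
     (\<forall>xs. valid_stream q k \<Gamma> n xs \<longrightarrow>
        out (det_run s0 \<delta> xs) = (Sat q n (set xs) \<noteq> {}))"

text \<open>Randomized single-pass streaming algorithm: random initial state,
  randomized transitions, randomized output; all states lie in S
  (space = log2 |S| bits); correct with probability at least 2/3 on every stream.\<close>
definition rand_run :: "nat pmf \<Rightarrow> (nat \<Rightarrow> constr \<Rightarrow> nat pmf) \<Rightarrow> constr list \<Rightarrow> nat pmf" where
  "rand_run s0 \<delta> xs = fold (\<lambda>c p. bind_pmf p (\<lambda>s. \<delta> s c)) xs s0"

definition rand_stream_alg ::
  "nat \<Rightarrow> nat \<Rightarrow> nat list set set \<Rightarrow> nat \<Rightarrow> real \<Rightarrow>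
   nat set \<Rightarrow> nat pmf \<Rightarrow> (nat \<Rightarrow> constr \<Rightarrow> nat pmf) \<Rightarrow> (nat \<Rightarrow> bool pmf) \<Rightarrow> bool" where
  "rand_stream_alg q k \<Gamma> n b S s0 \<delta> out \<longleftrightarrow>
     finite S \<and> real (card S) \<le> 2 powr b \<and> set_pmf s0 \<subseteq> S \<and>
     (\<forall>s\<in>S. \<forall>C. valid_constr q k \<Gamma> n C \<longrightarrow> set_pmf (\<delta> s C) \<subseteq> S) \<and>
     (\<forall>xs. valid_stream q k \<Gamma> n xs \<longrightarrow>
        measure_pmf.prob (bind_pmf (rand_run s0 \<delta> xs) out)
          {Sat q n (set xs) \<noteq> {}} \<ge> 2/3)"

end

theory Submission
  imports Defs "HOL-Library.NList"
begin

text \<open>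
  (a) It suffices to remember the solution set of the constraints read so far. Each such set is
  the solution set of a non-redundant subinstance, i.e. of at most \<open>NRD\<close> of the fewer than
  \<open>n^(k+1)\<close> possible constraints, so there are at most \<open>n^((k+1) NRD)\<close> states.

  (b) Fix a largest non-redundant instance \<open>I\<close> and \<open>Q \<subseteq> I\<close> containing one constraint for each
  relation and scope occurring in \<open>I\<close>, so that \<open>|I| \<le> q^k |Q|\<close>. For \<open>C \<in> Q\<close> let \<open>a\<close> satisfy
  \<open>I - {C}\<close> but not \<open>C\<close>. The stream \<open>(I - Q) \<union> T\<close>, followed by all constraints outside \<open>I\<close>
  satisfied by \<open>a\<close>, is satisfiable iff \<open>C \<notin> T\<close>. So the memory state after the first part
  solves the index problem on subsets of \<open>Q\<close>, which needs \<open>\<Omega>(|Q|)\<close> bits: majority votes over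
  576 independent samples of the state recover \<open>T\<close> up to \<open>|Q|/16\<close> errors.
\<close>

section \<open>Sampling and counting\<close>

lemma nlists_eq_lists_length: "nlists n A = {xs. set xs \<subseteq> A \<and> length xs = n}"
  unfolding nlists_def by blast

lemma finite_nlists: "finite A \<Longrightarrow> finite (nlists n A)"
  unfolding nlists_eq_lists_length by (rule finite_lists_length_eq)

lemma card_nlists: "finite A \<Longrightarrow> card (nlists n A) = card A ^ n"
  unfolding nlists_eq_lists_length by (rule card_lists_length_eq)

lemma sum_nlists_Suc:
  "(\<Sum>xs\<in>nlists (Suc t) S. F xs) = (\<Sum>x\<in>S. \<Sum>xs\<in>nlists t S. F (x # xs))"
proof -
  have "nlists (Suc t) S = (\<lambda>(x, xs). x # xs) ` (S \<times> nlists t S)"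
    by (auto simp: in_nlists_Suc_iff)
  moreover have "inj_on (\<lambda>(x, xs). x # xs) (S \<times> nlists t S)"
    by (auto simp: inj_on_def)
  ultimately show ?thesis
    by (simp add: sum.reindex sum.cartesian_product prod.case_distrib)
qed

lemma prod_list_nonneg_nlists:
  fixes \<mu> :: "'a \<Rightarrow> real"
  assumes "\<And>x. x \<in> S \<Longrightarrow> \<mu> x \<ge> 0" "xs \<in> nlists t S"
  shows "prod_list (map \<mu> xs) \<ge> 0"
  using assms(1) nlistsE_set[OF assms(2)] by (fastforce intro!: prod_list_nonneg)

text \<open>A list \<open>xs \<in> nlists t S\<close> is read as \<open>t\<close> independent draws from \<open>\<mu>\<close>, which occurs with
  probability \<open>prod_list (map \<mu> xs)\<close>.\<close>

lemma sum_prod_list_nlists: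
  fixes \<mu> :: "'a \<Rightarrow> real"
  assumes "(\<Sum>x\<in>S. \<mu> x) = 1"
  shows "(\<Sum>xs\<in>nlists t S. prod_list (map \<mu> xs)) = 1"
  by (induction t) (simp_all add: sum_nlists_Suc sum_distrib_left[symmetric] assms)

lemma sum_prod_list_sum_list_nlists:
  fixes \<mu> g :: "'a \<Rightarrow> real"
  assumes \<mu>: "(\<Sum>x\<in>S. \<mu> x) = 1" and centered: "(\<Sum>x\<in>S. \<mu> x * g x) = 0"
  shows "(\<Sum>xs\<in>nlists t S. prod_list (map \<mu> xs) * sum_list (map g xs)) = 0"
proof (induction t)
  case (Suc t)
  let ?W = "\<lambda>xs. prod_list (map \<mu> xs)" and ?G = "\<lambda>xs. sum_list (map g xs)"
  have "(\<Sum>xs\<in>nlists (Suc t) S. ?W xs * ?G xs)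
      = (\<Sum>x\<in>S. \<mu> x * g x * (\<Sum>xs\<in>nlists t S. ?W xs) + \<mu> x * (\<Sum>xs\<in>nlists t S. ?W xs * ?G xs))"
    by (simp add: sum_nlists_Suc sum.distrib sum_distrib_left algebra_simps)
  also have "\<dots> = 0"
    using Suc centered by (simp add: sum_prod_list_nlists[OF \<mu>])
  finally show ?case .
qed simp

lemma sum_prod_list_sum_list_squared_nlists:
  fixes \<mu> g :: "'a \<Rightarrow> real"
  assumes \<mu>: "(\<Sum>x\<in>S. \<mu> x) = 1" "\<And>x. x \<in> S \<Longrightarrow> \<mu> x \<ge> 0"
    and centered: "(\<Sum>x\<in>S. \<mu> x * g x) = 0" and bounded: "\<And>x. x \<in> S \<Longrightarrow> (g x)\<^sup>2 \<le> 1"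
  shows "(\<Sum>xs\<in>nlists t S. prod_list (map \<mu> xs) * (sum_list (map g xs))\<^sup>2) \<le> t"
proof (induction t)
  case (Suc t)
  let ?W = "\<lambda>xs. prod_list (map \<mu> xs)" and ?G = "\<lambda>xs. sum_list (map g xs)"
  have "(\<Sum>xs\<in>nlists (Suc t) S. ?W xs * (?G xs)\<^sup>2)
      = (\<Sum>x\<in>S. \<mu> x * (g x)\<^sup>2 * (\<Sum>xs\<in>nlists t S. ?W xs)
               + 2 * \<mu> x * g x * (\<Sum>xs\<in>nlists t S. ?W xs * ?G xs)
               + \<mu> x * (\<Sum>xs\<in>nlists t S. ?W xs * (?G xs)\<^sup>2))"
    by (simp add: sum_nlists_Suc sum.distrib sum_distrib_left algebra_simps power2_eq_square)
  also have "\<dots> = (\<Sum>x\<in>S. \<mu> x * (g x)\<^sup>2) + (\<Sum>xs\<in>nlists t S. ?W xs * (?G xs)\<^sup>2)"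
    by (simp add: sum_prod_list_nlists sum_prod_list_sum_list_nlists \<mu> centered sum.distrib
        sum_distrib_right[symmetric])
  also have "(\<Sum>x\<in>S. \<mu> x * (g x)\<^sup>2) \<le> (\<Sum>x\<in>S. \<mu> x)"
    by (rule sum_mono) (simp add: \<mu>(2) bounded mult_left_le)
  finally show ?case
    using Suc \<mu>(1) by simp
qed simp

lemma chebyshev_sample_sum_centered:
  fixes \<mu> g :: "'a \<Rightarrow> real"
  assumes "finite S"
    and \<mu>: "(\<Sum>x\<in>S. \<mu> x) = 1" "\<And>x. x \<in> S \<Longrightarrow> \<mu> x \<ge> 0"
    and centered: "(\<Sum>x\<in>S. \<mu> x * g x) = 0" and bounded: "\<And>x. x \<in> S \<Longrightarrow> (g x)\<^sup>2 \<le> 1"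
    and "d > 0" and deviates: "\<And>xs. xs \<in> nlists t S \<Longrightarrow> P xs \<Longrightarrow> d \<le> \<bar>sum_list (map g xs)\<bar>"
  shows "(\<Sum>xs\<in>{xs\<in>nlists t S. P xs}. prod_list (map \<mu> xs)) \<le> t / d\<^sup>2"
proof -
  let ?W = "\<lambda>xs. prod_list (map \<mu> xs)" and ?G = "\<lambda>xs. sum_list (map g xs)"
  have "?W xs \<le> ?W xs * (?G xs)\<^sup>2 / d\<^sup>2" if "xs \<in> nlists t S" "P xs" for xs
  proof -
    have "d\<^sup>2 \<le> (?G xs)\<^sup>2"
      using deviates[OF that] \<open>d > 0\<close> by (metis abs_le_square_iff abs_of_pos)
    then have "?W xs * d\<^sup>2 \<le> ?W xs * (?G xs)\<^sup>2"
      using prod_list_nonneg_nlists[OF \<mu>(2) that(1)] by (rule mult_left_mono)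
    then show ?thesis
      using \<open>d > 0\<close> by (simp add: field_simps)
  qed
  then have "(\<Sum>xs\<in>{xs\<in>nlists t S. P xs}. ?W xs)
      \<le> (\<Sum>xs\<in>{xs\<in>nlists t S. P xs}. ?W xs * (?G xs)\<^sup>2 / d\<^sup>2)"
    by (intro sum_mono) auto
  also have "\<dots> \<le> (\<Sum>xs\<in>nlists t S. ?W xs * (?G xs)\<^sup>2 / d\<^sup>2)"
    by (intro sum_mono2) (auto simp: finite_nlists \<open>finite S\<close> prod_list_nonneg_nlists[OF \<mu>(2)])
  also have "\<dots> = (\<Sum>xs\<in>nlists t S. ?W xs * (?G xs)\<^sup>2) / d\<^sup>2"
    by (simp add: sum_divide_distrib)
  also have "\<dots> \<le> t / d\<^sup>2"
    using sum_prod_list_sum_list_squared_nlists[OF \<mu> centered bounded]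
    by (simp add: divide_right_mono)
  finally show ?thesis .
qed

lemma chebyshev_sample_sum:
  fixes \<mu> g :: "'a \<Rightarrow> real"
  assumes "finite S"
    and \<mu>: "(\<Sum>x\<in>S. \<mu> x) = 1" "\<And>x. x \<in> S \<Longrightarrow> \<mu> x \<ge> 0"
    and g: "\<And>x. x \<in> S \<Longrightarrow> 0 \<le> g x \<and> g x \<le> 1" and "d > 0"
    and deviates: "\<And>xs. xs \<in> nlists t S \<Longrightarrow> P xs \<Longrightarrow>
                     d \<le> \<bar>sum_list (map g xs) - t * (\<Sum>x\<in>S. \<mu> x * g x)\<bar>"
  shows "(\<Sum>xs\<in>{xs\<in>nlists t S. P xs}. prod_list (map \<mu> xs)) \<le> t / d\<^sup>2"
proof (rule chebyshev_sample_sum_centered[OF assms(1) \<mu> _ _ \<open>d > 0\<close>])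
  define m where "m = (\<Sum>x\<in>S. \<mu> x * g x)"
  show "(\<Sum>x\<in>S. \<mu> x * (g x - m)) = 0"
    by (simp add: m_def right_diff_distrib sum_subtractf sum_distrib_right[symmetric] \<mu>(1))
  have "0 \<le> m" "m \<le> (\<Sum>x\<in>S. \<mu> x * 1)"
    unfolding m_def using \<mu>(2) g by (auto intro!: sum_nonneg sum_mono mult_left_le)
  then show "(g x - m)\<^sup>2 \<le> 1" if "x \<in> S" for x
    using g[OF that] \<mu>(1) by (auto simp: abs_square_le_1)
  show "d \<le> \<bar>sum_list (map (\<lambda>x. g x - m) xs)\<bar>" if "xs \<in> nlists t S" "P xs" for xs
    using deviates[OF that] nlistsE_length[OF that(1)]
    by (simp add: m_def sum_list_subtractf sum_list_triv)
qed

lemma exists_le_weighted_mean: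
  fixes w f :: "'a \<Rightarrow> real"
  assumes "finite A" "(\<Sum>x\<in>A. w x) = 1" "\<And>x. x \<in> A \<Longrightarrow> w x \<ge> 0"
    and "(\<Sum>x\<in>A. w x * f x) \<le> c"
  shows "\<exists>x\<in>A. f x \<le> c"
proof (rule ccontr)
  assume "\<not> ?thesis"
  then have less: "c < f x" if "x \<in> A" for x
    using that by auto
  obtain x0 where x0: "x0 \<in> A" "w x0 \<noteq> 0"
    using assms(2) sum.neutral[of A w] by (metis zero_neq_one)
  have "c = (\<Sum>x\<in>A. w x * c)"
    using assms(2) by (simp add: sum_distrib_right[symmetric])
  also have "\<dots> < (\<Sum>x\<in>A. w x * f x)"
  proof (rule sum_strict_mono_ex1[OF assms(1)])
    show "\<forall>x\<in>A. w x * c \<le> w x * f x"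
      using less assms(3) by (auto intro: mult_left_mono less_imp_le)
    show "\<exists>x\<in>A. w x * c < w x * f x"
      using x0 less[OF x0(1)] assms(3)[OF x0(1)] by (intro bexI[of _ x0]) auto
  qed
  finally show False
    using assms(4) by simp
qed

lemma card_subsets_card_le_exp_bound:
  assumes "finite Q"
  shows "real (card {E. E \<subseteq> Q \<and> card E \<le> r}) \<le> 4 ^ r * (5/4) ^ card Q"
proof -
  let ?m = "card Q"
  have "{E. E \<subseteq> Q \<and> card E \<le> r} = (\<Union>i\<in>{..r}. {E. E \<subseteq> Q \<and> card E = i})"
    by auto
  then have "card {E. E \<subseteq> Q \<and> card E \<le> r} \<le> (\<Sum>i\<le>r. card {E. E \<subseteq> Q \<and> card E = i})"
    by (simp add: card_UN_le)
  also have "\<dots> = (\<Sum>i\<le>r. ?m choose i)"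
    using n_subsets[OF assms] by simp
  finally have "real (card {E. E \<subseteq> Q \<and> card E \<le> r}) \<le> (\<Sum>i\<le>r. real (?m choose i))"
    by (simp flip: of_nat_sum)
  also have "\<dots> \<le> (\<Sum>i\<le>r. real (?m choose i) * (4 ^ r * (1/4) ^ i))"
  proof (intro sum_mono)
    fix i assume "i \<in> {..r}"
    then have "(4::real) ^ i \<le> 4 ^ r"
      by (intro power_increasing) auto
    then have "real (?m choose i) * 4 ^ i \<le> real (?m choose i) * 4 ^ r"
      by (intro mult_left_mono) auto
    then show "real (?m choose i) \<le> real (?m choose i) * (4 ^ r * (1/4) ^ i)"
      by (simp add: power_one_over field_simps)
  qed
  also have "\<dots> = 4 ^ r * (\<Sum>i\<le>r. real (?m choose i) * (1/4) ^ i)"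
    by (simp add: sum_distrib_left algebra_simps)
  also have "(\<Sum>i\<le>r. real (?m choose i) * (1/4) ^ i) \<le> (\<Sum>i\<le>max r ?m. real (?m choose i) * (1/4) ^ i)"
    by (intro sum_mono2) auto
  also have "\<dots> = (\<Sum>i\<le>?m. real (?m choose i) * (1/4) ^ i)"
    by (intro sum.mono_neutral_right) auto
  also have "\<dots> = (5/4) ^ ?m"
    using binomial_ring[of "1/4 :: real" 1 ?m] by simp
  finally show ?thesis
    by simp
qed

lemma card_subsets_card_le_power:
  assumes "finite A"
  shows "card {J. J \<subseteq> A \<and> card J \<le> r} \<le> (card A + 1) ^ r"
proof -
  let ?B = "insert None (Some ` A)"
  have "{J. J \<subseteq> A \<and> card J \<le> r} \<subseteq> (\<lambda>xs. {x. Some x \<in> set xs}) ` nlists r ?B"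
  proof
    fix J assume J: "J \<in> {J. J \<subseteq> A \<and> card J \<le> r}"
    then have "finite J"
      using assms finite_subset by auto
    then obtain ys where ys: "set ys = J" "distinct ys"
      using finite_distinct_list by blast
    then have "length ys = card J"
      by (metis distinct_card)
    then have "map Some ys @ replicate (r - card J) None \<in> nlists r ?B"
      using J ys by (intro nlistsI) auto
    moreover have "J = {x. Some x \<in> set (map Some ys @ replicate (r - card J) None)}"
      using ys by auto
    ultimately show "J \<in> (\<lambda>xs. {x. Some x \<in> set xs}) ` nlists r ?B"
      by (rule image_eqI[rotated])
  qed
  then have "card {J. J \<subseteq> A \<and> card J \<le> r} \<le> card ((\<lambda>xs. {x. Some x \<in> set xs}) ` nlists r ?B)"
    using assms by (intro card_mono) (simp_all add: finite_nlists)
  also have "\<dots> \<le> card (nlists r ?B)"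
    using assms by (intro card_image_le) (simp add: finite_nlists)
  also have "\<dots> = (card A + 1) ^ r"
    using assms by (simp add: card_nlists card_image)
  finally show ?thesis .
qed

section \<open>Recovering a subset from samples of a message\<close>

lemma sum_weighted_card_eq_sum_sum:
  fixes w :: "'a \<Rightarrow> real"
  assumes "finite N" "finite Q" "\<And>x. x \<in> N \<Longrightarrow> F x \<subseteq> Q"
  shows "(\<Sum>x\<in>N. w x * card (F x)) = (\<Sum>C\<in>Q. \<Sum>x\<in>{x\<in>N. C \<in> F x}. w x)"
proof -
  have "w x * card (F x) = (\<Sum>C\<in>Q. if C \<in> F x then w x else 0)" if "x \<in> N" for x
  proof -
    have "F x = {C\<in>Q. C \<in> F x}"
      using assms(3)[OF that] by auto
    then have "w x * card (F x) = (\<Sum>C\<in>{C\<in>Q. C \<in> F x}. w x)"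
      by (metis sum_constant mult.commute)
    then show ?thesis
      by (simp only: sum.inter_filter[OF assms(2)])
  qed
  then have "(\<Sum>x\<in>N. w x * card (F x)) = (\<Sum>x\<in>N. \<Sum>C\<in>Q. if C \<in> F x then w x else 0)"
    by (rule sum.cong[OF refl])
  also have "\<dots> = (\<Sum>C\<in>Q. \<Sum>x\<in>{x\<in>N. C \<in> F x}. w x)"
    by (simp only: sum.swap[of _ Q] sum.inter_filter[OF assms(1)])
  finally show ?thesis .
qed

text \<open>Read \<open>\<mu>\<close> as the distribution of a message \<open>x \<in> S\<close> encoding \<open>T\<close>, and \<open>g C x\<close> as the
  probability that a receiver holding \<open>C \<in> Q\<close> accepts \<open>x\<close>: it decides \<open>C \<notin> T\<close> correctly with
  probability \<open>2/3\<close>. A majority vote over 576 samples misclassifies each \<open>C\<close> with probability at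
  most \<open>576 / 96\<^sup>2 = 1/16\<close>, so some sample misclassifies at most \<open>|Q| / 16\<close> elements.\<close>

lemma exists_sample_recovering_subset:
  fixes \<mu> :: "'a \<Rightarrow> real" and g :: "'c \<Rightarrow> 'a \<Rightarrow> real"
  assumes "finite S" "finite Q" "T \<subseteq> Q"
    and \<mu>: "(\<Sum>x\<in>S. \<mu> x) = 1" "\<And>x. x \<in> S \<Longrightarrow> \<mu> x \<ge> 0"
    and g: "\<And>C x. C \<in> Q \<Longrightarrow> x \<in> S \<Longrightarrow> 0 \<le> g C x \<and> g C x \<le> 1"
    and outside: "\<And>C. C \<in> Q \<Longrightarrow> C \<notin> T \<Longrightarrow> 2/3 \<le> (\<Sum>x\<in>S. \<mu> x * g C x)"
    and inside: "\<And>C. C \<in> T \<Longrightarrow> (\<Sum>x\<in>S. \<mu> x * g C x) \<le> 1/3"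
  shows "\<exists>xs\<in>nlists 576 S.
           card (sym_diff T {C\<in>Q. sum_list (map (g C) xs) \<le> 288}) \<le> card Q div 16"
proof -
  define D where "D xs = {C\<in>Q. sum_list (map (g C) xs) \<le> 288}" for xs
  let ?W = "\<lambda>xs. prod_list (map \<mu> xs)"
  have finite_samples: "finite (nlists 576 S)"
    using \<open>finite S\<close> by (rule finite_nlists)
  have misclassified: "(\<Sum>xs\<in>{xs\<in>nlists 576 S. C \<in> sym_diff T (D xs)}. ?W xs) \<le> 1/16"
    if "C \<in> Q" for C
  proof -
    have "(\<Sum>xs\<in>{xs\<in>nlists 576 S. C \<in> sym_diff T (D xs)}. ?W xs) \<le> real 576 / 96\<^sup>2"
    proof (rule chebyshev_sample_sum[OF \<open>finite S\<close> \<mu>])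
      show "0 \<le> g C x \<and> g C x \<le> 1" if "x \<in> S" for x
        using g \<open>C \<in> Q\<close> that by blast
      show "(0::real) < 96"
        by simp
      fix xs assume "C \<in> sym_diff T (D xs)"
      then show "96 \<le> \<bar>sum_list (map (g C) xs) - real 576 * (\<Sum>x\<in>S. \<mu> x * g C x)\<bar>"
        using inside[of C] outside[OF \<open>C \<in> Q\<close>] \<open>C \<in> Q\<close> unfolding D_def by auto
    qed
    then show ?thesis
      by simp
  qed
  have "(\<Sum>xs\<in>nlists 576 S. ?W xs * card (sym_diff T (D xs)))
      = (\<Sum>C\<in>Q. \<Sum>xs\<in>{xs\<in>nlists 576 S. C \<in> sym_diff T (D xs)}. ?W xs)"
    using \<open>T \<subseteq> Q\<close> by (intro sum_weighted_card_eq_sum_sum finite_samples \<open>finite Q\<close>) (auto simp: D_def)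
  also have "\<dots> \<le> card Q / 16"
    using sum_mono[OF misclassified] by simp
  finally have "(\<Sum>xs\<in>nlists 576 S. ?W xs * card (sym_diff T (D xs))) \<le> card Q / 16" .
  from exists_le_weighted_mean[OF finite_samples sum_prod_list_nlists[OF \<mu>(1)]
      prod_list_nonneg_nlists[OF \<mu>(2)] this]
  obtain xs where "xs \<in> nlists 576 S" "real (card (sym_diff T (D xs))) \<le> card Q / 16"
    ..
  then show ?thesis
    unfolding D_def by (intro bexI[of _ xs]) linarith+
qed

lemma two_power_card_le_card_samples:
  fixes \<mu> :: "'c set \<Rightarrow> 'a \<Rightarrow> real" and g :: "'c \<Rightarrow> 'a \<Rightarrow> real"
  assumes "finite S" "finite Q"
    and \<mu>: "\<And>T. T \<subseteq> Q \<Longrightarrow> (\<Sum>x\<in>S. \<mu> T x) = 1" "\<And>T x. T \<subseteq> Q \<Longrightarrow> x \<in> S \<Longrightarrow> \<mu> T x \<ge> 0"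
    and g: "\<And>C x. C \<in> Q \<Longrightarrow> x \<in> S \<Longrightarrow> 0 \<le> g C x \<and> g C x \<le> 1"
    and outside: "\<And>T C. T \<subseteq> Q \<Longrightarrow> C \<in> Q \<Longrightarrow> C \<notin> T \<Longrightarrow> 2/3 \<le> (\<Sum>x\<in>S. \<mu> T x * g C x)"
    and inside: "\<And>T C. T \<subseteq> Q \<Longrightarrow> C \<in> T \<Longrightarrow> (\<Sum>x\<in>S. \<mu> T x * g C x) \<le> 1/3"
  shows "2 ^ card Q \<le> card S ^ 576 * card {E. E \<subseteq> Q \<and> card E \<le> card Q div 16}"
proof -
  define D where "D xs = {C\<in>Q. sum_list (map (g C) xs) \<le> 288}" for xs
  define close where "close xs = {T. T \<subseteq> Q \<and> card (sym_diff T (D xs)) \<le> card Q div 16}" for xs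
  have "Pow Q \<subseteq> (\<Union>xs\<in>nlists 576 S. close xs)"
  proof
    fix T assume "T \<in> Pow Q"
    then have "T \<subseteq> Q"
      by simp
    from exists_sample_recovering_subset[OF assms(1,2) this \<mu>[OF this] g outside[OF this] inside[OF this]]
    obtain xs where xs: "xs \<in> nlists 576 S" "card (sym_diff T (D xs)) \<le> card Q div 16"
      unfolding D_def ..
    show "T \<in> (\<Union>xs\<in>nlists 576 S. close xs)"
      using \<open>T \<subseteq> Q\<close> xs(2) unfolding close_def by (intro UN_I[OF xs(1)]) simp
  qed
  moreover have "finite (\<Union>xs\<in>nlists 576 S. close xs)"
    by (rule finite_subset[of _ "Pow Q"]) (auto simp: close_def assms(2))
  ultimately have "card (Pow Q) \<le> card (\<Union>xs\<in>nlists 576 S. close xs)"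
    by (rule card_mono[rotated])
  also have "\<dots> \<le> (\<Sum>xs\<in>nlists 576 S. card (close xs))"
    using assms(1) by (intro card_UN_le finite_nlists)
  also have "\<dots> \<le> (\<Sum>xs\<in>nlists 576 S. card {E. E \<subseteq> Q \<and> card E \<le> card Q div 16})"
  proof (intro sum_mono)
    fix xs
    have "inj_on (\<lambda>T. sym_diff T (D xs)) (close xs)"
      by (rule inj_onI) blast
    moreover have "(\<lambda>T. sym_diff T (D xs)) ` close xs \<subseteq> {E. E \<subseteq> Q \<and> card E \<le> card Q div 16}"
      unfolding close_def D_def by auto
    ultimately show "card (close xs) \<le> card {E. E \<subseteq> Q \<and> card E \<le> card Q div 16}"
      using assms(2) by (intro card_inj_on_le) auto
  qed
  also have "\<dots> = card S ^ 576 * card {E. E \<subseteq> Q \<and> card E \<le> card Q div 16}"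
    using assms(1) by (simp add: card_nlists)
  finally show ?thesis
    using assms(2) by (simp add: card_Pow)
qed

lemma card_le_log_card_samples:
  fixes \<mu> :: "'c set \<Rightarrow> 'a \<Rightarrow> real" and g :: "'c \<Rightarrow> 'a \<Rightarrow> real"
  assumes "finite S" "S \<noteq> {}" "finite Q"
    and \<mu>: "\<And>T. T \<subseteq> Q \<Longrightarrow> (\<Sum>x\<in>S. \<mu> T x) = 1" "\<And>T x. T \<subseteq> Q \<Longrightarrow> x \<in> S \<Longrightarrow> \<mu> T x \<ge> 0"
    and g: "\<And>C x. C \<in> Q \<Longrightarrow> x \<in> S \<Longrightarrow> 0 \<le> g C x \<and> g C x \<le> 1"
    and outside: "\<And>T C. T \<subseteq> Q \<Longrightarrow> C \<in> Q \<Longrightarrow> C \<notin> T \<Longrightarrow> 2/3 \<le> (\<Sum>x\<in>S. \<mu> T x * g C x)"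
    and inside: "\<And>T C. T \<subseteq> Q \<Longrightarrow> C \<in> T \<Longrightarrow> (\<Sum>x\<in>S. \<mu> T x * g C x) \<le> 1/3"
  shows "13/24 * card Q \<le> 576 * log 2 (card S)"
proof -
  let ?m = "card Q" and ?N = "real (card S)"
  have N_pos: "?N > 0"
    using assms(1,2) by (simp add: card_gt_0_iff)
  have "2 ^ ?m \<le> card S ^ 576 * card {E. E \<subseteq> Q \<and> card E \<le> ?m div 16}"
    by (rule two_power_card_le_card_samples; fact assms \<mu> g outside inside)
  then have "real (2 ^ ?m) \<le> real (card S ^ 576 * card {E. E \<subseteq> Q \<and> card E \<le> ?m div 16})"
    by (simp only: of_nat_le_iff)
  also have "\<dots> \<le> ?N ^ 576 * (4 ^ (?m div 16) * (5/4) ^ ?m)"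
    using card_subsets_card_le_exp_bound[OF assms(3)] by (simp add: mult_left_mono)
  finally have "log 2 (2 ^ ?m) \<le> log 2 (?N ^ 576 * (4 ^ (?m div 16) * (5/4) ^ ?m))"
    using N_pos by (subst log_le_cancel_iff) auto
  also have "\<dots> = 576 * log 2 ?N + real (?m div 16) * 2 + ?m * log 2 (5/4)"
    using N_pos log_nat_power[of 2 2 2] by (simp add: log_mult log_nat_power)
  finally have "?m \<le> 576 * log 2 ?N + real (?m div 16) * 2 + ?m * log 2 (5/4)"
    by simp
  moreover have "3 * log 2 (5/4 :: real) \<le> 1"
  proof -
    have "3 * log 2 (5/4 :: real) = log 2 ((5/4) ^ 3)"
      by (simp add: log_nat_power)
    also have "\<dots> \<le> log 2 2"
      by (subst log_le_cancel_iff) (auto simp: power3_eq_cube)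
    finally show ?thesis
      by simp
  qed
  then have "?m * log 2 (5/4) \<le> ?m / 3"
    using mult_left_mono[of "3 * log 2 (5/4 :: real)" 1 "real ?m"] by simp
  moreover have "real (?m div 16) * 2 \<le> ?m / 8"
    by linarith
  ultimately show ?thesis
    by simp
qed

section \<open>Non-redundant instances\<close>

definition all_constrs :: "nat \<Rightarrow> nat \<Rightarrow> nat list set set \<Rightarrow> nat \<Rightarrow> constr set" where
  "all_constrs q k \<Gamma> n = {C. valid_constr q k \<Gamma> n C}"

lemma all_constrs_subset: "all_constrs q k \<Gamma> n \<subseteq> \<Gamma> \<times> nlists k {..<n} \<times> nlists k {..<q}"
  unfolding all_constrs_def valid_constr_def by (auto intro!: nlistsI)

lemma finite_all_constrs: "finite \<Gamma> \<Longrightarrow> finite (all_constrs q k \<Gamma> n)"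
  by (rule finite_subset[OF all_constrs_subset]) (simp add: finite_nlists)

lemma card_all_constrs_le: "finite \<Gamma> \<Longrightarrow> card (all_constrs q k \<Gamma> n) \<le> card \<Gamma> * n ^ k * q ^ k"
  using card_mono[OF _ all_constrs_subset, of \<Gamma> k n q]
  by (simp add: finite_nlists card_cartesian_product card_nlists)

lemma is_instance_subset_all_constrs: "is_instance q k \<Gamma> n I \<Longrightarrow> I \<subseteq> all_constrs q k \<Gamma> n"
  unfolding is_instance_def all_constrs_def by auto

lemma Sat_antimono: "J \<subseteq> I \<Longrightarrow> Sat q n I \<subseteq> Sat q n J"
  unfolding Sat_def by auto

lemma Sat_Un: "Sat q n (I \<union> J) = Sat q n I \<inter> Sat q n J"
  unfolding Sat_def by auto

lemma non_redundant_witness: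
  assumes "non_redundant q n I" "C \<in> I"
  obtains a where "a \<in> Sat q n (I - {C})" "\<not> sat_constr q C a"
proof -
  have "Sat q n I \<subset> Sat q n (I - {C})"
    using assms Sat_antimono[of "I - {C}" I q n] unfolding non_redundant_def by blast
  then show ?thesis
    using that unfolding Sat_def by auto
qed

lemma exists_non_redundant_subset_same_Sat:
  "finite J \<Longrightarrow> \<exists>J'\<subseteq>J. non_redundant q n J' \<and> Sat q n J' = Sat q n J"
proof (induction "card J" arbitrary: J rule: less_induct)
  case (less J)
  show ?case
  proof (cases "non_redundant q n J")
    case False
    then obtain C where C: "C \<in> J" "Sat q n (J - {C}) = Sat q n J"
      unfolding non_redundant_def by blast
    with less.prems have "card (J - {C}) < card J"
      by (intro card_Diff1_less)
    with less.hyps less.prems obtain J' where "J' \<subseteq> J - {C}" "non_redundant q n J'"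
      "Sat q n J' = Sat q n (J - {C})"
      by (meson finite_Diff)
    with C show ?thesis
      by auto
  qed blast
qed

lemma finite_card_non_redundant_instances:
  assumes "finite \<Gamma>"
  shows "finite {card I | I. is_instance q k \<Gamma> n I \<and> non_redundant q n I}"
proof (rule finite_subset)
  show "{card I | I. is_instance q k \<Gamma> n I \<and> non_redundant q n I} \<subseteq> {..card (all_constrs q k \<Gamma> n)}"
    using card_mono[OF finite_all_constrs[OF assms] is_instance_subset_all_constrs] by auto
qed simp

lemma card_le_NRD:
  assumes "finite \<Gamma>" "is_instance q k \<Gamma> n I" "non_redundant q n I"
  shows "card I \<le> NRD q k \<Gamma> n"
  unfolding NRD_def using assms by (intro Max_ge[OF finite_card_non_redundant_instances]) auto

lemma exists_non_redundant_card_NRD: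
  assumes "finite \<Gamma>"
  obtains I where "is_instance q k \<Gamma> n I" "non_redundant q n I" "card I = NRD q k \<Gamma> n"
proof -
  have "is_instance q k \<Gamma> n {} \<and> non_redundant q n {}"
    unfolding is_instance_def non_redundant_def by simp
  then have "{card I | I. is_instance q k \<Gamma> n I \<and> non_redundant q n I} \<noteq> {}"
    by blast
  from Max_in[OF finite_card_non_redundant_instances[OF assms] this] show ?thesis
    using that unfolding NRD_def by auto
qed

lemma one_le_NRD:
  assumes "finite \<Gamma>" "nontrivial_lang q k \<Gamma>" "n \<ge> k" "q > 0"
  shows "1 \<le> NRD q k \<Gamma> n"
proof -
  obtain R t where R: "R \<in> \<Gamma>" "t \<in> full_tuples q k" "t \<notin> R"
    using assms(2) unfolding nontrivial_lang_def by blast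
  then have t: "length t = k" "\<forall>x\<in>set t. x < q"
    unfolding full_tuples_def by auto
  define C :: constr where "C = (R, [0..<k], replicate k 0)"
  define a where "a = t @ replicate (n - k) 0"
  have "a \<in> assignments q n"
    unfolding a_def assignments_def using t assms(3,4) by auto
  moreover have "map (\<lambda>(i, l). (a ! i + l) mod q) (zip [0..<k] (replicate k 0)) = t"
    using t by (intro nth_equalityI) (auto simp: a_def nth_append)
  then have "\<not> sat_constr q C a"
    unfolding sat_constr_def C_def using R by simp
  ultimately have "non_redundant q n {C}"
    unfolding non_redundant_def Sat_def by auto
  moreover have "is_instance q k \<Gamma> n {C}"
    unfolding is_instance_def valid_constr_def C_def using R assms(3,4) by auto
  ultimately show ?thesis
    using card_le_NRD[OF assms(1)] by fastforce
qed

section \<open>The deterministic algorithm\<close>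

text \<open>Every solution set is the solution set of a non-redundant subinstance.\<close>

lemma card_Sat_image_le:
  assumes "finite \<Gamma>"
  shows "card (Sat q n ` Pow (all_constrs q k \<Gamma> n))
           \<le> (card (all_constrs q k \<Gamma> n) + 1) ^ NRD q k \<Gamma> n"
proof -
  let ?A = "all_constrs q k \<Gamma> n" and ?r = "NRD q k \<Gamma> n"
  have finite_A: "finite ?A"
    using assms by (rule finite_all_constrs)
  have "Sat q n ` Pow ?A \<subseteq> Sat q n ` {J. J \<subseteq> ?A \<and> card J \<le> ?r}"
  proof
    fix X assume "X \<in> Sat q n ` Pow ?A"
    then obtain J where J: "J \<subseteq> ?A" "X = Sat q n J"
      by auto
    then have "finite J"
      using finite_A finite_subset by auto
    then obtain J' where J': "J' \<subseteq> J" "non_redundant q n J'" "Sat q n J' = Sat q n J"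
      using exists_non_redundant_subset_same_Sat by blast
    then have "is_instance q k \<Gamma> n J'"
      using J(1) finite_A unfolding is_instance_def all_constrs_def by (auto intro: finite_subset)
    then have "card J' \<le> ?r"
      using card_le_NRD[OF assms _ J'(2)] by blast
    then show "X \<in> Sat q n ` {J. J \<subseteq> ?A \<and> card J \<le> ?r}"
      using J J' by auto
  qed
  then have "card (Sat q n ` Pow ?A) \<le> card (Sat q n ` {J. J \<subseteq> ?A \<and> card J \<le> ?r})"
    using finite_A by (intro card_mono) auto
  also have "\<dots> \<le> card {J. J \<subseteq> ?A \<and> card J \<le> ?r}"
    using finite_A by (intro card_image_le) auto
  also have "\<dots> \<le> (card ?A + 1) ^ ?r"
    using finite_A by (rule card_subsets_card_le_power)
  finally show ?thesis .
qed

text \<open>The algorithm stores (an encoding \<open>h\<close> of) the solution set of the constraints read so far.\<close>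

lemma det_run_encoded_Sat:
  assumes "inj_on h (Sat q n ` Pow A)" "J \<subseteq> A" "set xs \<subseteq> A"
  shows "det_run (h (Sat q n J)) (\<lambda>s C. h (inv_into (Sat q n ` Pow A) h s \<inter> Sat q n {C})) xs
           = h (Sat q n (J \<union> set xs))"
  using assms(2,3)
proof (induction xs arbitrary: J)
  case (Cons C xs)
  have "Sat q n J \<in> Sat q n ` Pow A"
    using Cons.prems(1) by simp
  then have "inv_into (Sat q n ` Pow A) h (h (Sat q n J)) \<inter> Sat q n {C} = Sat q n (J \<union> {C})"
    by (simp add: inv_into_f_f[OF assms(1)] flip: Sat_Un)
  moreover have "J \<union> {C} \<subseteq> A" "set xs \<subseteq> A"
    using Cons.prems by auto
  ultimately show ?case
    using Cons.IH[of "J \<union> {C}"] by (simp add: det_run_def Un_assoc)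
qed (simp add: det_run_def)

lemma det_stream_alg_Sat_states:
  assumes "finite \<Gamma>" and space: "real (card (Sat q n ` Pow (all_constrs q k \<Gamma> n))) \<le> 2 powr b"
  shows "\<exists>S s0 \<delta> out. det_stream_alg q k \<Gamma> n b S s0 \<delta> out"
proof -
  let ?A = "all_constrs q k \<Gamma> n"
  let ?States = "Sat q n ` Pow ?A"
  have "finite ?States"
    using finite_all_constrs[OF assms(1)] by simp
  then obtain h where h: "bij_betw h ?States {0..<card ?States}"
    by (rule ex_bij_betw_finite_nat[THEN exE])
  then have "inj_on h ?States" and h_onto: "h ` ?States = {0..<card ?States}"
    by (simp_all add: bij_betw_def)
  define \<delta> where "\<delta> s C = h (inv_into ?States h s \<inter> Sat q n {C})" for s C
  have run: "det_run (h (Sat q n J)) \<delta> xs = h (Sat q n (J \<union> set xs))"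
    if "J \<subseteq> ?A" "set xs \<subseteq> ?A" for J xs
    unfolding \<delta>_def using \<open>inj_on h ?States\<close> that by (rule det_run_encoded_Sat)
  show ?thesis
  proof (intro exI)
    show "det_stream_alg q k \<Gamma> n b {0..<card ?States} (h (Sat q n {})) \<delta> (\<lambda>s. inv_into ?States h s \<noteq> {})"
      unfolding det_stream_alg_def
    proof (intro conjI allI ballI impI)
      show "real (card {0..<card ?States}) \<le> 2 powr b"
        using space by simp
      show "h (Sat q n {}) \<in> {0..<card ?States}"
        unfolding h_onto[symmetric] by (intro imageI) simp
    next
      fix s C assume s: "s \<in> {0..<card ?States}" and "valid_constr q k \<Gamma> n C"
      then have "C \<in> ?A"
        unfolding all_constrs_def by simp
      from s obtain X where "X \<in> ?States" "s = h X"
        unfolding h_onto[symmetric] by (rule imageE)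
      from \<open>X \<in> ?States\<close> obtain J where "J \<in> Pow ?A" "X = Sat q n J"
        by (rule imageE)
      then have "J \<subseteq> ?A" "s = h (Sat q n J)"
        using \<open>s = h X\<close> by simp_all
      have "\<delta> s C = det_run s \<delta> [C]"
        by (simp add: det_run_def)
      also have "\<dots> = h (Sat q n (J \<union> {C}))"
        using run[of J "[C]"] \<open>s = h (Sat q n J)\<close> \<open>J \<subseteq> ?A\<close> \<open>C \<in> ?A\<close> by simp
      finally have "\<delta> s C = h (Sat q n (J \<union> {C}))" .
      then show "\<delta> s C \<in> {0..<card ?States}"
        unfolding h_onto[symmetric] using \<open>J \<subseteq> ?A\<close> \<open>C \<in> ?A\<close> by (simp add: image_eqI)
    next
      fix xs assume "valid_stream q k \<Gamma> n xs"
      then have "set xs \<subseteq> ?A"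
        unfolding valid_stream_def all_constrs_def by auto
      then show "(inv_into ?States h (det_run (h (Sat q n {})) \<delta> xs) \<noteq> {}) = (Sat q n (set xs) \<noteq> {})"
        using run[of "{}" xs] by (simp add: inv_into_f_f[OF \<open>inj_on h ?States\<close>])
    qed simp
  qed
qed

lemma det_stream_alg_NRD_log_space:
  assumes "finite \<Gamma>"
  shows "\<exists>c N. \<forall>n\<ge>N. \<exists>S s0 \<delta> out.
           det_stream_alg q k \<Gamma> n (c * real (NRD q k \<Gamma> n) * log 2 (real n)) S s0 \<delta> out"
proof (intro exI[of _ "real (k + 1)"] exI[of _ "card \<Gamma> * q ^ k + 2"] allI impI)
  fix n assume n: "n \<ge> card \<Gamma> * q ^ k + 2"
  let ?A = "all_constrs q k \<Gamma> n" and ?r = "NRD q k \<Gamma> n"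
  have "1 \<le> n ^ k"
    using n by simp
  then have "card ?A + 1 \<le> card \<Gamma> * q ^ k * n ^ k + n ^ k"
    using card_all_constrs_le[OF assms, of q k n] by (simp add: algebra_simps)
  also have "\<dots> = (card \<Gamma> * q ^ k + 1) * n ^ k"
    by (simp add: algebra_simps)
  also have "\<dots> \<le> n * n ^ k"
    using n by (intro mult_right_mono) auto
  finally have "card ?A + 1 \<le> n ^ (k + 1)"
    by simp
  then have "card (Sat q n ` Pow ?A) \<le> (n ^ (k + 1)) ^ ?r"
    by (rule order_trans[OF card_Sat_image_le[OF assms] power_mono[OF _ zero_le]])
  then have "real (card (Sat q n ` Pow ?A)) \<le> real n ^ ((k + 1) * ?r)"
    by (simp only: power_mult of_nat_le_iff of_nat_power[symmetric])
  also have "\<dots> = real n powr real ((k + 1) * ?r)"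
    using n by (intro powr_realpow[symmetric]) simp
  also have "\<dots> = (2 powr log 2 (real n)) powr real ((k + 1) * ?r)"
    using n by simp
  also have "\<dots> = 2 powr (real (k + 1) * real ?r * log 2 (real n))"
    by (simp add: powr_powr algebra_simps)
  finally show "\<exists>S s0 \<delta> out. det_stream_alg q k \<Gamma> n (real (k + 1) * real ?r * log 2 (real n)) S s0 \<delta> out"
    by (rule det_stream_alg_Sat_states[OF assms])
qed

section \<open>The randomized lower bound\<close>

definition constr_scope :: "constr \<Rightarrow> nat list set \<times> nat list" where
  "constr_scope C = (fst C, fst (snd C))"

definition shift_constr :: "nat \<Rightarrow> (nat \<Rightarrow> nat) \<Rightarrow> constr \<Rightarrow> constr" where
  "shift_constr q e C =
     (case C of (R, idx, sh) \<Rightarrow> (R, idx, map (\<lambda>(i, l). (l + e i) mod q) (zip idx sh)))"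

lemma constr_scope_shift_constr [simp]: "constr_scope (shift_constr q e C) = constr_scope C"
  by (simp add: constr_scope_def shift_constr_def split: prod.split)

lemma sat_constr_cong:
  assumes "\<forall>i\<in>set idx. x ! i mod q = y ! i mod q"
  shows "sat_constr q (R, idx, sh) x = sat_constr q (R, idx, sh) y"
proof -
  have "map (\<lambda>(i, l). (x ! i + l) mod q) (zip idx sh) = map (\<lambda>(i, l). (y ! i + l) mod q) (zip idx sh)"
    using assms by (intro map_cong refl) (auto dest: set_zip_leftD intro: mod_add_cong)
  then show ?thesis
    unfolding sat_constr_def prod.case by (rule arg_cong[where f = "\<lambda>t. t \<in> R"])
qed

lemma sat_constr_shift_constr:
  assumes "length idx = length sh" and "\<forall>i\<in>set idx. y ! i mod q = (x ! i + e i) mod q"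
  shows "sat_constr q (shift_constr q e (R, idx, sh)) x = sat_constr q (R, idx, sh) y"
proof -
  have "(x ! i + (l + e i) mod q) mod q = (y ! i + l) mod q" if "i \<in> set idx" for i l
  proof -
    have "(x ! i + (l + e i) mod q) mod q = ((x ! i + e i) mod q + l) mod q"
      by (simp add: mod_simps ac_simps)
    also have "\<dots> = (y ! i + l) mod q"
      using assms(2) that by (metis mod_add_left_eq)
    finally show ?thesis .
  qed
  then have "map (\<lambda>(i, l). (x ! i + l) mod q) (zip idx (map (\<lambda>(i, l). (l + e i) mod q) (zip idx sh)))
      = map (\<lambda>(i, l). (y ! i + l) mod q) (zip idx sh)"
    using assms(1) by (intro nth_equalityI) auto
  then show ?thesis
    unfolding sat_constr_def shift_constr_def by simp
qed

lemma valid_constr_shift_constr: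
  assumes "valid_constr q k \<Gamma> n C" "q > 0"
  shows "valid_constr q k \<Gamma> n (shift_constr q e C)"
proof -
  obtain R idx sh where C: "C = (R, idx, sh)"
    by (rule prod_cases3)
  have valid: "R \<in> \<Gamma>" "length idx = k" "length sh = k" "\<forall>i\<in>set idx. i < n"
    "\<forall>j<k. \<forall>j'<k. idx ! j = idx ! j' \<longrightarrow> sh ! j = sh ! j'"
    using assms(1) unfolding C valid_constr_def prod.case by blast+
  define sh' where "sh' = map (\<lambda>(i, l). (l + e i) mod q) (zip idx sh)"
  have sh': "length sh' = k" "\<And>j. j < k \<Longrightarrow> sh' ! j = (sh ! j + e (idx ! j)) mod q"
    unfolding sh'_def using valid(2,3) by auto
  have "\<forall>l\<in>set sh'. l < q"
    using sh' assms(2) by (auto simp: in_set_conv_nth)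
  moreover have "\<forall>j<k. \<forall>j'<k. idx ! j = idx ! j' \<longrightarrow> sh' ! j = sh' ! j'"
  proof (intro allI impI)
    fix j j' assume "j < k" "j' < k" "idx ! j = idx ! j'"
    moreover from this have "sh ! j = sh ! j'"
      using valid(5) by blast
    ultimately show "sh' ! j = sh' ! j'"
      by (simp add: sh'(2))
  qed
  ultimately show ?thesis
    using valid(1-4) sh'(1)
    unfolding C shift_constr_def prod.case sh'_def[symmetric] valid_constr_def by blast
qed

lemma sat_constr_shift_progression:
  assumes "valid_constr q k \<Gamma> n C" "a \<in> assignments q n" "length b = n"
  defines "d \<equiv> \<lambda>i. b ! i + (q - a ! i)"
    and "v \<equiv> \<lambda>m. map (\<lambda>i. a ! i + m * (b ! i + (q - a ! i))) [0..<n]"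
  shows "sat_constr q (shift_constr q (\<lambda>i. m * d i) C) a = sat_constr q C (v m)"
    and "sat_constr q (shift_constr q (\<lambda>i. m * d i) C) b = sat_constr q C (v (Suc m))"
    and "sat_constr q C (v (Suc 0)) = sat_constr q C b"
    and "sat_constr q C (v q) = sat_constr q C a"
proof -
  obtain R idx sh where C: "C = (R, idx, sh)"
    by (rule prod_cases3)
  have idx: "length idx = length sh" "\<forall>i\<in>set idx. i < n"
    using assms(1) unfolding C valid_constr_def by auto
  have v: "v m ! i = a ! i + m * d i" if "i < n" for m i
    using that unfolding v_def d_def by simp
  have a_d: "a ! i + d i = b ! i + q" if "i < n" for i
    using assms(2) that nth_mem[of i a] unfolding d_def assignments_def by fastforce
  have v_Suc: "v (Suc m) ! i mod q = (b ! i + m * d i) mod q" if "i < n" for m i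
  proof -
    have "v (Suc m) ! i = (a ! i + d i) + m * d i"
      using v[OF that] by (simp add: algebra_simps)
    also have "\<dots> = (b ! i + m * d i) + q"
      using a_d[OF that] by simp
    finally show ?thesis
      by simp
  qed
  show "sat_constr q (shift_constr q (\<lambda>i. m * d i) C) a = sat_constr q C (v m)"
    unfolding C using idx v by (intro sat_constr_shift_constr) auto
  show "sat_constr q (shift_constr q (\<lambda>i. m * d i) C) b = sat_constr q C (v (Suc m))"
    unfolding C using idx v_Suc by (intro sat_constr_shift_constr) auto
  show "sat_constr q C (v (Suc 0)) = sat_constr q C b"
    unfolding C using idx v_Suc[of _ 0] by (intro sat_constr_cong) auto
  show "sat_constr q C (v q) = sat_constr q C a"
    unfolding C using idx v by (intro sat_constr_cong) auto
qed

text \<open>If \<open>a\<close> violated \<open>C\<close>, then with \<open>d = b - a\<close> and \<open>v m = a + m d\<close> (mod \<open>q\<close>) every shift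
  of \<open>C\<close> by \<open>m d\<close> differs from \<open>C\<close>, so induction on \<open>m\<close> carries satisfaction of \<open>C\<close> from
  \<open>v 1 = b\<close> up to \<open>v q = a\<close>.\<close>

lemma sat_constr_of_sat_shifts:
  assumes "q > 0" "valid_constr q k \<Gamma> n C" "a \<in> assignments q n" "length b = n"
    and "sat_constr q C b"
    and shifts: "\<And>D. valid_constr q k \<Gamma> n D \<Longrightarrow> constr_scope D = constr_scope C \<Longrightarrow> D \<noteq> C \<Longrightarrow>
                   sat_constr q D a \<Longrightarrow> sat_constr q D b"
  shows "sat_constr q C a"
proof (rule ccontr)
  assume unsat: "\<not> sat_constr q C a"
  note progression = sat_constr_shift_progression[OF assms(2-4)]
  let ?v = "\<lambda>m. map (\<lambda>i. a ! i + m * (b ! i + (q - a ! i))) [0..<n]"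
  have "sat_constr q C (?v (Suc m))" for m
  proof (induction m)
    case 0
    then show ?case
      using progression(3) assms(5) by simp
  next
    case (Suc m)
    let ?D = "shift_constr q (\<lambda>i. Suc m * (b ! i + (q - a ! i))) C"
    have "sat_constr q ?D a"
      using Suc.IH by (simp only: progression(1))
    moreover from this have "?D \<noteq> C"
      using unsat by auto
    ultimately have "sat_constr q ?D b"
      using shifts valid_constr_shift_constr[OF assms(2,1)] by simp
    then show ?case
      by (simp only: progression(2))
  qed
  then show False
    using progression(4) unsat assms(1) by (metis Suc_pred)
qed

lemma exists_subset_inj_on_same_image: "\<exists>B\<subseteq>A. inj_on f B \<and> f ` B = f ` A"
proof (intro exI conjI)
  show "inv_into A f ` f ` A \<subseteq> A"
    by (auto intro: inv_into_into)
  show "inj_on f (inv_into A f ` f ` A)"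
    by (rule inj_onI) (auto simp: f_inv_into_f)
  show "f ` inv_into A f ` f ` A = f ` A"
    by (auto simp: image_image f_inv_into_f)
qed

lemma card_le_card_scopes:
  assumes "is_instance q k \<Gamma> n I"
  shows "card I \<le> card (constr_scope ` I) * q ^ k"
proof -
  let ?f = "\<lambda>C. (constr_scope C, snd (snd C))"
  have "finite I"
    using assms unfolding is_instance_def by simp
  have "inj_on ?f I"
    by (rule inj_onI) (auto simp: constr_scope_def prod_eq_iff)
  moreover have "?f ` I \<subseteq> constr_scope ` I \<times> nlists k {..<q}"
    using assms unfolding is_instance_def valid_constr_def by (auto intro!: nlistsI)
  ultimately have "card I \<le> card (constr_scope ` I \<times> nlists k {..<q})"
    using \<open>finite I\<close> by (intro card_inj_on_le) (auto simp: finite_nlists)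
  then show ?thesis
    by (simp add: card_cartesian_product card_nlists)
qed

text \<open>Only \<open>C\<close> can rule out \<open>a\<close>. If \<open>C \<in> T\<close>, every shift of \<open>C\<close> that \<open>a\<close> satisfies is present
  (those in \<open>I\<close> lie outside \<open>Q\<close>), so by \<open>sat_constr_of_sat_shifts\<close> a solution would force \<open>a\<close>
  to satisfy \<open>C\<close>.\<close>

lemma Sat_index_instance_iff:
  assumes "q > 0" "is_instance q k \<Gamma> n I" "Q \<subseteq> I" "inj_on constr_scope Q" "T \<subseteq> Q" "C \<in> Q"
    and a: "a \<in> Sat q n (I - {C})" "\<not> sat_constr q C a"
  shows "Sat q n ((I - Q) \<union> T \<union> ({D \<in> all_constrs q k \<Gamma> n. sat_constr q D a} - I)) \<noteq> {}
         \<longleftrightarrow> C \<notin> T"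
    (is "Sat q n ?J \<noteq> {} \<longleftrightarrow> _")
proof
  assume "C \<notin> T"
  then have "a \<in> Sat q n ?J"
    using a assms(3,5,6) unfolding Sat_def by blast
  then show "Sat q n ?J \<noteq> {}"
    by blast
next
  assume "Sat q n ?J \<noteq> {}"
  then obtain x where x: "x \<in> Sat q n ?J"
    by blast
  show "C \<notin> T"
  proof
    assume "C \<in> T"
    have "valid_constr q k \<Gamma> n C"
      using assms(2,3,6) unfolding is_instance_def by auto
    moreover have "a \<in> assignments q n" "length x = n" "sat_constr q C x"
      using a x \<open>C \<in> T\<close> unfolding Sat_def assignments_def by auto
    moreover have "sat_constr q D x"
      if "valid_constr q k \<Gamma> n D" "constr_scope D = constr_scope C" "D \<noteq> C" "sat_constr q D a" for D
    proof -
      have "D \<notin> Q" if "D \<in> I"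
        using inj_onD[OF assms(4)] \<open>constr_scope D = constr_scope C\<close> \<open>D \<noteq> C\<close> \<open>C \<in> Q\<close> by blast
      then have "D \<in> ?J"
        using that unfolding all_constrs_def by auto
      then show ?thesis
        using x unfolding Sat_def by auto
    qed
    ultimately have "sat_constr q C a"
      by (rule sat_constr_of_sat_shifts[OF assms(1)])
    then show False
      using a(2) by simp
  qed
qed

lemma non_redundant_index_family:
  assumes "q > 0" "finite \<Gamma>" "is_instance q k \<Gamma> n I" "non_redundant q n I"
  obtains Q :: "constr set" and xs :: "constr set \<Rightarrow> constr list" and ys :: "constr \<Rightarrow> constr list"
  where "finite Q" "card I \<le> card Q * q ^ k"
    "\<And>T C. T \<subseteq> Q \<Longrightarrow> C \<in> Q \<Longrightarrow> valid_stream q k \<Gamma> n (xs T @ ys C)"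
    "\<And>T C. T \<subseteq> Q \<Longrightarrow> C \<in> Q \<Longrightarrow> Sat q n (set (xs T @ ys C)) \<noteq> {} \<longleftrightarrow> C \<notin> T"
proof -
  let ?A = "all_constrs q k \<Gamma> n"
  have I: "finite I" "I \<subseteq> ?A"
    using assms(3) is_instance_subset_all_constrs unfolding is_instance_def by auto
  from exists_subset_inj_on_same_image[of I constr_scope]
  obtain Q where Q: "Q \<subseteq> I" "inj_on constr_scope Q" "constr_scope ` Q = constr_scope ` I"
    by blast
  have "finite Q"
    using Q(1) I(1) by (rule finite_subset)
  have "card Q = card (constr_scope ` I)"
    using card_image[OF Q(2)] Q(3) by simp
  then have "card I \<le> card Q * q ^ k"
    using card_le_card_scopes[OF assms(3)] by simp
  have "\<exists>a. a \<in> Sat q n (I - {C}) \<and> \<not> sat_constr q C a" if "C \<in> Q" for C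
    using non_redundant_witness[OF assms(4)] Q(1) that by blast
  then obtain a where a: "\<And>C. C \<in> Q \<Longrightarrow> a C \<in> Sat q n (I - {C}) \<and> \<not> sat_constr q C (a C)"
    by metis
  obtain list_of :: "constr set \<Rightarrow> constr list"
    where list_of: "\<And>X. finite X \<Longrightarrow> set (list_of X) = X \<and> distinct (list_of X)"
    using finite_distinct_list by metis
  define xs where "xs T = list_of ((I - Q) \<union> T)" for T
  define ys where "ys C = list_of ({D \<in> ?A. sat_constr q D (a C)} - I)" for C
  have set_xs: "set (xs T) = (I - Q) \<union> T" "distinct (xs T)" if "T \<subseteq> Q" for T
    using list_of[of "(I - Q) \<union> T"] I(1) \<open>finite Q\<close> that unfolding xs_def by (auto intro: finite_subset)
  have set_ys: "set (ys C) = {D \<in> ?A. sat_constr q D (a C)} - I" "distinct (ys C)" for C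
    using list_of finite_all_constrs[OF assms(2)] unfolding ys_def by auto
  show thesis
  proof (rule that[OF \<open>finite Q\<close> \<open>card I \<le> card Q * q ^ k\<close>])
    fix T C assume "T \<subseteq> Q" "C \<in> Q"
    show "valid_stream q k \<Gamma> n (xs T @ ys C)"
      using set_xs[OF \<open>T \<subseteq> Q\<close>] set_ys[of C] I(2) Q(1) \<open>T \<subseteq> Q\<close>
      unfolding valid_stream_def all_constrs_def by auto
    show "Sat q n (set (xs T @ ys C)) \<noteq> {} \<longleftrightarrow> C \<notin> T"
      using Sat_index_instance_iff[OF assms(1,3) Q(1,2) \<open>T \<subseteq> Q\<close> \<open>C \<in> Q\<close> a[OF \<open>C \<in> Q\<close>, THEN conjunct1]
          a[OF \<open>C \<in> Q\<close>, THEN conjunct2]]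
      by (simp add: set_xs[OF \<open>T \<subseteq> Q\<close>] set_ys Un_assoc)
  qed
qed

lemma rand_run_Cons: "rand_run p \<delta> (C # xs) = rand_run (bind_pmf p (\<lambda>s. \<delta> s C)) \<delta> xs"
  by (simp add: rand_run_def)

lemma rand_run_append: "rand_run p \<delta> (xs @ ys) = rand_run (rand_run p \<delta> xs) \<delta> ys"
  by (simp add: rand_run_def)

lemma rand_run_eq_bind: "rand_run p \<delta> xs = bind_pmf p (\<lambda>s. rand_run (return_pmf s) \<delta> xs)"
proof (induction xs arbitrary: p)
  case Nil
  have "(\<lambda>s. rand_run (return_pmf s) \<delta> []) = return_pmf"
    by (simp add: rand_run_def fun_eq_iff)
  then show ?case
    by (simp add: rand_run_def bind_return_pmf')
next
  case (Cons C xs)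
  have "rand_run p \<delta> (C # xs) = bind_pmf (bind_pmf p (\<lambda>s. \<delta> s C)) (\<lambda>s. rand_run (return_pmf s) \<delta> xs)"
    unfolding rand_run_Cons by (rule Cons.IH)
  also have "\<dots> = bind_pmf p (\<lambda>s. bind_pmf (\<delta> s C) (\<lambda>s. rand_run (return_pmf s) \<delta> xs))"
    by (rule bind_assoc_pmf)
  also have "\<dots> = bind_pmf p (\<lambda>s. rand_run (return_pmf s) \<delta> (C # xs))"
    unfolding rand_run_Cons bind_return_pmf Cons.IH[of "\<delta> _ C", symmetric] ..
  finally show ?case .
qed

lemma set_pmf_rand_run_subset:
  assumes "set_pmf p \<subseteq> S" "\<And>s C. s \<in> S \<Longrightarrow> C \<in> set xs \<Longrightarrow> set_pmf (\<delta> s C) \<subseteq> S"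
  shows "set_pmf (rand_run p \<delta> xs) \<subseteq> S"
  using assms
proof (induction xs arbitrary: p)
  case (Cons C xs)
  have "set_pmf (\<delta> s C) \<subseteq> S" if "s \<in> S" for s
    using Cons.prems(2)[OF that] by simp
  then have "set_pmf (bind_pmf p (\<lambda>s. \<delta> s C)) \<subseteq> S"
    using Cons.prems(1) by auto
  with Cons show ?case
    by (simp add: rand_run_Cons)
qed (simp add: rand_run_def)

lemma pmf_bind_rand_run_append:
  assumes "finite S" "set_pmf (rand_run p \<delta> xs) \<subseteq> S"
  shows "pmf (bind_pmf (rand_run p \<delta> (xs @ ys)) out) v
       = (\<Sum>s\<in>S. pmf (rand_run p \<delta> xs) s * pmf (bind_pmf (rand_run (return_pmf s) \<delta> ys) out) v)"
proof -
  have "bind_pmf (rand_run p \<delta> (xs @ ys)) out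
      = bind_pmf (rand_run p \<delta> xs) (\<lambda>s. bind_pmf (rand_run (return_pmf s) \<delta> ys) out)"
    unfolding rand_run_append by (subst rand_run_eq_bind) (rule bind_assoc_pmf)
  then have "pmf (bind_pmf (rand_run p \<delta> (xs @ ys)) out) v
      = measure_pmf.expectation (rand_run p \<delta> xs) (\<lambda>s. pmf (bind_pmf (rand_run (return_pmf s) \<delta> ys) out) v)"
    by (simp add: pmf_bind)
  also have "\<dots> = (\<Sum>s\<in>S. pmf (rand_run p \<delta> xs) s *\<^sub>R pmf (bind_pmf (rand_run (return_pmf s) \<delta> ys) out) v)"
    using assms by (intro integral_measure_pmf) auto
  finally show ?thesis
    by simp
qed

lemma rand_stream_alg_card_states:
  assumes "rand_stream_alg q k \<Gamma> n b S s0 \<delta> out"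
  shows "finite S" "1 \<le> card S" "log 2 (card S) \<le> b"
proof -
  show "finite S"
    using assms unfolding rand_stream_alg_def by blast
  moreover have "S \<noteq> {}"
    using assms set_pmf_not_empty[of s0] unfolding rand_stream_alg_def by blast
  ultimately show "1 \<le> card S"
    by (simp add: Suc_le_eq card_gt_0_iff)
  then show "log 2 (card S) \<le> b"
    using assms unfolding rand_stream_alg_def by (simp add: le_powr_iff)
qed

text \<open>A one-pass algorithm answering the instances \<open>xs T @ ys C\<close> turns into a one-way
  protocol for the index problem on \<open>Q\<close>: the state after \<open>xs T\<close> is the message.\<close>

lemma index_le_log_card_states:
  assumes alg: "rand_stream_alg q k \<Gamma> n b S s0 \<delta> out" and "finite Q"
    and valid: "\<And>T C. T \<subseteq> Q \<Longrightarrow> C \<in> Q \<Longrightarrow> valid_stream q k \<Gamma> n (xs T @ ys C)"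
    and sat: "\<And>T C. T \<subseteq> Q \<Longrightarrow> C \<in> Q \<Longrightarrow> Sat q n (set (xs T @ ys C)) \<noteq> {} \<longleftrightarrow> C \<notin> T"
  shows "13/24 * card Q \<le> 576 * log 2 (card S)"
proof (cases "Q = {}")
  case True
  then show ?thesis
    using rand_stream_alg_card_states(2)[OF alg] by simp
next
  case False
  then obtain C0 where "C0 \<in> Q"
    by blast
  have "finite S" "S \<noteq> {}"
    using rand_stream_alg_card_states(1,2)[OF alg] by auto
  have "set_pmf s0 \<subseteq> S"
    and closed: "\<And>s C. s \<in> S \<Longrightarrow> valid_constr q k \<Gamma> n C \<Longrightarrow> set_pmf (\<delta> s C) \<subseteq> S"
    and correct: "\<And>xs. valid_stream q k \<Gamma> n xs \<Longrightarrow>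
        measure_pmf.prob (bind_pmf (rand_run s0 \<delta> xs) out) {Sat q n (set xs) \<noteq> {}} \<ge> 2/3"
    using alg unfolding rand_stream_alg_def by blast+
  define \<mu> where "\<mu> T s = pmf (rand_run s0 \<delta> (xs T)) s" for T s
  define g where "g C s = pmf (bind_pmf (rand_run (return_pmf s) \<delta> (ys C)) out) True" for C s
  have support: "set_pmf (rand_run s0 \<delta> (xs T)) \<subseteq> S" if "T \<subseteq> Q" for T
    using valid[OF that \<open>C0 \<in> Q\<close>] closed \<open>set_pmf s0 \<subseteq> S\<close> unfolding valid_stream_def
    by (intro set_pmf_rand_run_subset) auto
  have accept: "pmf (bind_pmf (rand_run s0 \<delta> (xs T @ ys C)) out) True = (\<Sum>s\<in>S. \<mu> T s * g C s)"
    if "T \<subseteq> Q" for T C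
    unfolding \<mu>_def g_def by (rule pmf_bind_rand_run_append[OF \<open>finite S\<close> support[OF that]])
  show ?thesis
  proof (rule card_le_log_card_samples[OF \<open>finite S\<close> \<open>S \<noteq> {}\<close> \<open>finite Q\<close>])
    show "(\<Sum>s\<in>S. \<mu> T s) = 1" if "T \<subseteq> Q" for T
      unfolding \<mu>_def using sum_pmf_eq_1[OF \<open>finite S\<close> support[OF that]] .
    show "0 \<le> \<mu> T s" for T s
      unfolding \<mu>_def by simp
    show "0 \<le> g C s \<and> g C s \<le> 1" for C s
      unfolding g_def by (simp add: pmf_le_1)
  next
    fix T C assume "T \<subseteq> Q" "C \<in> Q" "C \<notin> T"
    then have "Sat q n (set (xs T @ ys C)) \<noteq> {}"
      using sat by blast
    then show "2/3 \<le> (\<Sum>s\<in>S. \<mu> T s * g C s)"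
      using correct[OF valid[OF \<open>T \<subseteq> Q\<close> \<open>C \<in> Q\<close>]] accept[of T C, OF \<open>T \<subseteq> Q\<close>]
      by (simp add: measure_pmf_single)
  next
    fix T C assume "T \<subseteq> Q" "C \<in> T"
    then have "C \<in> Q" "Sat q n (set (xs T @ ys C)) = {}"
      using sat by blast+
    then show "(\<Sum>s\<in>S. \<mu> T s * g C s) \<le> 1/3"
      using correct[OF valid[OF \<open>T \<subseteq> Q\<close> \<open>C \<in> Q\<close>]] accept[of T C, OF \<open>T \<subseteq> Q\<close>]
      by (simp add: measure_pmf_single pmf_True_conv_False)
  qed
qed

lemma NRD_le_rand_stream_space:
  assumes "q > 0" "finite \<Gamma>" "rand_stream_alg q k \<Gamma> n b S s0 \<delta> out"
  shows "13/24 * NRD q k \<Gamma> n \<le> 576 * q ^ k * b"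
proof -
  obtain I where I: "is_instance q k \<Gamma> n I" "non_redundant q n I" "card I = NRD q k \<Gamma> n"
    using exists_non_redundant_card_NRD[OF assms(2)] by blast
  show ?thesis
  proof (rule non_redundant_index_family[OF assms(1,2) I(1,2)])
    fix Q xs ys
    assume "finite Q" and card_I: "card I \<le> card Q * q ^ k"
      and "\<And>T C. T \<subseteq> Q \<Longrightarrow> C \<in> Q \<Longrightarrow> valid_stream q k \<Gamma> n (xs T @ ys C)"
      and "\<And>T C. T \<subseteq> Q \<Longrightarrow> C \<in> Q \<Longrightarrow> Sat q n (set (xs T @ ys C)) \<noteq> {} \<longleftrightarrow> C \<notin> T"
    then have "13/24 * card Q \<le> 576 * log 2 (card S)"
      by (intro index_le_log_card_states[OF assms(3)])
    then have "13/24 * card Q \<le> 576 * b"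
      using rand_stream_alg_card_states(3)[OF assms(3)] by linarith
    have "real (NRD q k \<Gamma> n) \<le> card Q * q ^ k"
      using I(3) card_I by (simp flip: of_nat_mult of_nat_power)
    then have "13/24 * NRD q k \<Gamma> n \<le> (13/24 * card Q) * q ^ k"
      by simp
    also have "\<dots> \<le> (576 * b) * q ^ k"
      using \<open>13/24 * card Q \<le> 576 * b\<close> by (intro mult_right_mono) simp_all
    finally show ?thesis
      by (simp add: algebra_simps)
  qed
qed

lemma no_rand_stream_alg_sublinear_space:
  assumes "q > 0" "finite \<Gamma>" "nontrivial_lang q k \<Gamma>" "s \<in> o(\<lambda>n. real (NRD q k \<Gamma> n))"
  shows "\<not> (\<forall>\<^sub>F n in at_top. \<exists>S s0 \<delta> out. rand_stream_alg q k \<Gamma> n (s n) S s0 \<delta> out)"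
proof
  define c :: real where "c = 13 / (24 * 576 * q ^ k)"
  have "c > 0"
    unfolding c_def using assms(1) by simp
  assume "\<forall>\<^sub>F n in at_top. \<exists>S s0 \<delta> out. rand_stream_alg q k \<Gamma> n (s n) S s0 \<delta> out"
  moreover have "\<forall>\<^sub>F n in at_top. norm (s n) \<le> c / 2 * norm (real (NRD q k \<Gamma> n))"
    using landau_o.smallD[OF assms(4), of "c / 2"] \<open>c > 0\<close> by simp
  moreover have "\<forall>\<^sub>F n in at_top. n \<ge> k"
    by (rule eventually_ge_at_top)
  ultimately have "\<forall>\<^sub>F n :: nat in at_top. False"
  proof eventually_elim
    case (elim n)
    then obtain S s0 \<delta> out where "rand_stream_alg q k \<Gamma> n (s n) S s0 \<delta> out"
      by blast
    then have "c * NRD q k \<Gamma> n \<le> s n"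
      using NRD_le_rand_stream_space[OF assms(1,2)] assms(1) unfolding c_def by (simp add: field_simps)
    moreover have "s n \<le> c / 2 * NRD q k \<Gamma> n"
      using elim by simp
    moreover have "1 \<le> NRD q k \<Gamma> n"
      using one_le_NRD[OF assms(2,3) _ assms(1)] elim by simp
    then have "0 < c * NRD q k \<Gamma> n"
      using \<open>c > 0\<close> by simp
    ultimately show False
      by linarith
  qed
  then show False
    by simp
qed

theorem theorem1p1:
  fixes q k :: nat and \<Gamma> :: "nat list set set"
  assumes "q \<ge> 2" and "k \<ge> 1"
    and "finite \<Gamma>"
    and "\<forall>R\<in>\<Gamma>. is_relation q k R"
    and "nontrivial_lang q k \<Gamma>"
  shows "(\<exists>c N. \<forall>n\<ge>N. \<exists>S s0 \<delta> out.
            det_stream_alg q k \<Gamma> n (c * real (NRD q k \<Gamma> n) * log 2 (real n)) S s0 \<delta> out)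
       \<and> (\<forall>s :: nat \<Rightarrow> real. s \<in> o(\<lambda>n. real (NRD q k \<Gamma> n)) \<longrightarrow>
            \<not> (\<forall>\<^sub>F n in at_top. \<exists>S s0 \<delta> out. rand_stream_alg q k \<Gamma> n (s n) S s0 \<delta> out))"
proof (intro conjI allI impI)
  show "\<exists>c N. \<forall>n\<ge>N. \<exists>S s0 \<delta> out.
          det_stream_alg q k \<Gamma> n (c * real (NRD q k \<Gamma> n) * log 2 (real n)) S s0 \<delta> out"
    using assms(3) by (rule det_stream_alg_NRD_log_space)
next
  fix s :: "nat \<Rightarrow> real"
  assume "s \<in> o(\<lambda>n. real (NRD q k \<Gamma> n))"
  with assms(1,3,5) show "\<not> (\<forall>\<^sub>F n in at_top. \<exists>S s0 \<delta> out. rand_stream_alg q k \<Gamma> n (s n) S s0 \<delta> out)"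
    by (intro no_rand_stream_alg_sublinear_space) simp_all
qed

end
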